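(* Consider the model below with $\min\{M,M_f,N\}<1$ and $\epsilon_2\ge0$, fix all parameters other than $\epsilon_1$, and let $\delta:=(M-1)(1-M_f\beta)+\lambda\sigma N$. (i) There exists $\bar{\epsilon}_{BR,RPE}\in[-\infty,\infty)$, depending only on the model parameters, such that a bounded-rationality restricted-perceptions equilibrium (BR-RPE) exists if and only if $\epsilon_1\ge\bar{\epsilon}_{BR,RPE}$. (ii) If $\delta<0$, then $\bar{\epsilon}_{BR,RPE}=-\infty$. (iii) Let $\bar{\epsilon}_{BR}\in[-\infty,\infty)$ be the number such that a bounded-rationality equilibrium (BRE) exists if and only if $\epsilon_1\ge\bar{\epsilon}_{BR}$. If either ($\delta\ge0$ and $p+q\ge1$) or $\delta<0$, then $\bar{\epsilon}_{BR}\ge\bar{\epsilon}_{BR,RPE}$.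
   Context: Parameters: $0<\beta<1$, $\sigma,\lambda,\mu>0$, $\psi>1$, $M,M_f,N\in(0,1]$, $p,q\in(0,1]$ with $(p,q)\neq(1,1)$. The shock $\epsilon_t$ is a two-state Markov chain on $\{\epsilon_1,\epsilon_2\}$ with $\Pr(\epsilon_{t+1}=\epsilon_1\mid\epsilon_t=\epsilon_1)=p$, $\Pr(\epsilon_{t+1}=\epsilon_2\mid\epsilon_t=\epsilon_2)=q$; $\bar q:=(1-p)/(2-p-q)$. Model: $x_t=M\hat E_t x_{t+1}-\sigma(i_t-N\hat E_t\pi_{t+1})+\epsilon_t$, $\pi_t=\lambda x_t+M_f\beta\hat E_t\pi_{t+1}$, $i_t=\max\{\psi\pi_t,-\mu\}$. Say $Y_j=(x_j,\pi_j)$, $j=1,2$, solves the model given forecasts $Y^e_j=(x^e_j,\pi^e_j)$ if for $j=1,2$, with $i_j=\max\{\psi\pi_j,-\mu\}$: $x_j=Mx^e_j-\sigma(i_j-N\pi^e_j)+\epsilon_j$ and $\pi_j=\lambda x_j+M_f\beta\pi^e_j$. A BRE is $(Y_1,Y_2)$ solving the model given $Y^e_1=pY_1+(1-p)Y_2$, $Y^e_2=(1-q)Y_1+qY_2$. A BR-RPE is $(Y_1,Y_2)$ solving the model given $Y^e_1=Y^e_2=\bar qY_2+(1-\bar q)Y_1$. *)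

theory Defs
  imports Complex_Main "HOL-Library.Extended_Real"
begin

definition solves_state ::
  "real \<Rightarrow> real \<Rightarrow> real \<Rightarrow> real \<Rightarrow> real \<Rightarrow> real \<Rightarrow> real \<Rightarrow> real \<Rightarrow>
   real \<Rightarrow> real \<Rightarrow> real \<Rightarrow> real \<Rightarrow> real \<Rightarrow> bool" where
  "solves_state bet sig lam mu psi M Mf N eps x infl xe pe \<longleftrightarrow>
     (let i = max (psi * infl) (- mu) in
        x = M * xe - sig * (i - N * pe) + eps \<and> infl = lam * x + Mf * bet * pe)"

definition BRE_exists ::
  "real \<Rightarrow> real \<Rightarrow> real \<Rightarrow> real \<Rightarrow> real \<Rightarrow> real \<Rightarrow> real \<Rightarrow> real \<Rightarrow>
   real \<Rightarrow> real \<Rightarrow> real \<Rightarrow> real \<Rightarrow> bool" where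
  "BRE_exists bet sig lam mu psi M Mf N p q eps1 eps2 \<longleftrightarrow>
     (\<exists>x1 infl1 x2 infl2.
        solves_state bet sig lam mu psi M Mf N eps1 x1 infl1
          (p * x1 + (1 - p) * x2) (p * infl1 + (1 - p) * infl2) \<and>
        solves_state bet sig lam mu psi M Mf N eps2 x2 infl2
          ((1 - q) * x1 + q * x2) ((1 - q) * infl1 + q * infl2))"

definition BRRPE_exists ::
  "real \<Rightarrow> real \<Rightarrow> real \<Rightarrow> real \<Rightarrow> real \<Rightarrow> real \<Rightarrow> real \<Rightarrow> real \<Rightarrow>
   real \<Rightarrow> real \<Rightarrow> real \<Rightarrow> real \<Rightarrow> bool" where
  "BRRPE_exists bet sig lam mu psi M Mf N p q eps1 eps2 \<longleftrightarrow>
     (let qb = (1 - p) / (2 - p - q) in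
      \<exists>x1 infl1 x2 infl2.
        solves_state bet sig lam mu psi M Mf N eps1 x1 infl1
          (qb * x2 + (1 - qb) * x1) (qb * infl2 + (1 - qb) * infl1) \<and>
        solves_state bet sig lam mu psi M Mf N eps2 x2 infl2
          (qb * x2 + (1 - qb) * x1) (qb * infl2 + (1 - qb) * infl1))"

end

theory Submission
  imports Defs "HOL-Analysis.Elementary_Metric_Spaces"
begin

(* Both equilibrium notions reduce to equations in inflation y alone, through the increasing
   piecewise linear bijection h y = y / lam + sig * max (psi * y) (- mu). A BR-RPE is a pair with
   h y_j = eps_j + g * t, where t = (1 - qb) * y1 + qb * y2 is the common forecast and
   g = (1 + delta) / lam; that is, t is a zero of the gap
   t |-> (1 - qb) * h^-1 (eps1 + g * t) + qb * h^-1 (eps2 + g * t) - t. Since the gap is negative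
   for large t, a BR-RPE exists iff the gap is somewhere nonnegative. This is monotone in eps1, true
   at eps1 = 0 because eps2 >= 0, and true for all eps1 when delta < 0, as the gap then grows without
   bound as t decreases. When delta >= 0 the gap is maximal at one of its two kinks, so its maximum
   is continuous in eps1 and the admissible eps1 form a closed half-line.

   A BRE (u1, u2) satisfies the averaged BR-RPE equation, while its difference equation carries an
   extra term kappa * (u1 - u2), where 0 <= kappa <= g if p + q >= 1. Along the curve
   h y1 - h y2 = eps1 - eps2 there is then a point whose averaged value is at most that of
   (u1, u2), and by continuity one where it is equal; that point is a BR-RPE. *)

lemma weighted_sum_affine:
  fixes w1 w2 a1 a2 b t :: real
  assumes "w1 + w2 = 1"
  shows "w1 * (a1 + b * t) + w2 * (a2 + b * t) - t = w1 * a1 + w2 * a2 + (b - 1) * t"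
proof -
  have "w1 * (a1 + b * t) + w2 * (a2 + b * t) - t = w1 * a1 + w2 * a2 + ((w1 + w2) * b - 1) * t"
    by (simp add: algebra_simps)
  then show ?thesis using assms by simp
qed

lemma weighted_sum_mono:
  fixes w1 w2 a1 a2 b1 b2 :: real
  assumes "0 \<le> w1" "0 \<le> w2" "a1 \<le> b1" "a2 \<le> b2"
  shows "w1 * a1 + w2 * a2 \<le> w1 * b1 + w2 * b2"
  using assms by (intro add_mono mult_left_mono)

lemma affine_le_max:
  fixes a b t \<alpha> \<beta> :: real
  assumes "a \<le> t" "t \<le> b"
  shows "\<alpha> + \<beta> * t \<le> max (\<alpha> + \<beta> * a) (\<alpha> + \<beta> * b)"
proof (cases "0 \<le> \<beta>")
  case True
  then have "\<beta> * t \<le> \<beta> * b" using assms(2) by (simp add: mult_left_mono)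
  then show ?thesis by simp
next
  case False
  then have "\<beta> * t \<le> \<beta> * a" using assms(1) by (intro mult_left_mono_neg) auto
  then show ?thesis by simp
qed

lemma stationary_weights_average:
  fixes w1 w2 p q z1 z2 :: real
  assumes "w1 * (1 - p) = w2 * (1 - q)"
  shows "w1 * (p * z1 + (1 - p) * z2) + w2 * ((1 - q) * z1 + q * z2) = w1 * z1 + w2 * z2"
proof -
  have "w1 * (p * z1 + (1 - p) * z2) + w2 * ((1 - q) * z1 + q * z2) - (w1 * z1 + w2 * z2)
      = (w2 * (1 - q) - w1 * (1 - p)) * (z1 - z2)"
    by (simp add: algebra_simps)
  then show ?thesis using assms by simp
qed

lemma pair_eqs_iff_diff_and_avg:
  fixes w1 w2 h1 h2 s e1 e2 :: real
  assumes "w1 + w2 = 1"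
  shows "(h1 - s = e1 \<and> h2 - s = e2) \<longleftrightarrow> (h1 - h2 = e1 - e2 \<and> w1 * h1 + w2 * h2 - s = w1 * e1 + w2 * e2)"
proof -
  have w2: "w2 = 1 - w1" using assms by simp
  have key: "w1 * h1 + w2 * h2 - s - (w1 * e1 + w2 * e2) = (h2 - s - e2) + w1 * ((h1 - h2) - (e1 - e2))"
    unfolding w2 by (simp add: algebra_simps)
  show ?thesis
  proof
    assume "h1 - s = e1 \<and> h2 - s = e2"
    then show "h1 - h2 = e1 - e2 \<and> w1 * h1 + w2 * h2 - s = w1 * e1 + w2 * e2"
      using key by auto
  next
    assume H: "h1 - h2 = e1 - e2 \<and> w1 * h1 + w2 * h2 - s = w1 * e1 + w2 * e2"
    then have "w1 * ((h1 - h2) - (e1 - e2)) = 0" by simp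
    with H key show "h1 - s = e1 \<and> h2 - s = e2" by linarith
  qed
qed

section \<open>The interest-rate rule with an effective lower bound\<close>

(* zlb A B y is sig * max (psi * y) (- mu) with A = sig * psi and B = sig * mu; with L = 1 / lam,
   zlb_map L A B y = y / lam + sig * max (psi * y) (- mu). *)
definition zlb :: "real \<Rightarrow> real \<Rightarrow> real \<Rightarrow> real" where
  "zlb A B y = max (A * y) (- B)"

definition zlb_map :: "real \<Rightarrow> real \<Rightarrow> real \<Rightarrow> real \<Rightarrow> real" where
  "zlb_map L A B y = L * y + zlb A B y"

definition zlb_map_inv :: "real \<Rightarrow> real \<Rightarrow> real \<Rightarrow> real \<Rightarrow> real" where
  "zlb_map_inv L A B z = min (z / (L + A)) ((z + B) / L)"

definition zlb_net :: "real \<Rightarrow> real \<Rightarrow> real \<Rightarrow> real \<Rightarrow> real" where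
  "zlb_net A B d y = zlb A B y - d * y"

lemma continuous_on_zlb [continuous_intros]:
  "continuous_on S f \<Longrightarrow> continuous_on S (\<lambda>x. zlb A B (f x))"
  unfolding zlb_def by (intro continuous_intros)

lemma continuous_on_zlb_map [continuous_intros]:
  "continuous_on S f \<Longrightarrow> continuous_on S (\<lambda>x. zlb_map L A B (f x))"
  unfolding zlb_map_def by (intro continuous_intros)

lemma continuous_on_zlb_map_inv [continuous_intros]:
  "L > 0 \<Longrightarrow> A > 0 \<Longrightarrow> continuous_on S f \<Longrightarrow> continuous_on S (\<lambda>x. zlb_map_inv L A B (f x))"
  unfolding zlb_map_inv_def by (intro continuous_intros) auto

lemma continuous_on_zlb_net [continuous_intros]:
  "continuous_on S f \<Longrightarrow> continuous_on S (\<lambda>x. zlb_net A B d (f x))"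
  unfolding zlb_net_def by (intro continuous_intros)

lemma zlb_below: "A > 0 \<Longrightarrow> y \<le> - B / A \<Longrightarrow> zlb A B y = - B"
  by (auto simp: zlb_def field_simps)

lemma zlb_above: "A > 0 \<Longrightarrow> - B / A \<le> y \<Longrightarrow> zlb A B y = A * y"
  by (auto simp: zlb_def field_simps)

context
  fixes L A B :: real
  assumes L: "L > 0" and A: "A > 0" and B: "B > 0"
begin

lemma zlb_map_inv_below: "z \<le> - B * (L + A) / A \<Longrightarrow> zlb_map_inv L A B z = (z + B) / L"
  using L A by (auto simp: zlb_map_inv_def min_def field_simps)

lemma zlb_map_inv_above: "- B * (L + A) / A \<le> z \<Longrightarrow> zlb_map_inv L A B z = z / (L + A)"
  using L A by (auto simp: zlb_map_inv_def min_def field_simps)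

lemma zlb_map_inv_zlb_map [simp]: "zlb_map_inv L A B (zlb_map L A B y) = y"
proof (cases "- B / A \<le> y")
  case True
  then have map: "zlb_map L A B y = (L + A) * y"
    by (simp add: zlb_map_def zlb_above A algebra_simps)
  have "(L + A) * (- B / A) \<le> (L + A) * y"
    using True L A by (intro mult_left_mono) auto
  then have "- B * (L + A) / A \<le> zlb_map L A B y"
    by (simp add: map mult.commute)
  then show ?thesis
    using L A by (simp add: zlb_map_inv_above map)
next
  case False
  then have map: "zlb_map L A B y = L * y - B"
    by (simp add: zlb_map_def zlb_below A)
  have "L * y \<le> L * (- B / A)"
    using False L by (intro mult_left_mono) auto
  moreover have "L * (- B / A) - B = - B * (L + A) / A"
    using A by (simp add: field_simps)
  ultimately have "zlb_map L A B y \<le> - B * (L + A) / A"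
    by (simp add: map)
  then have "zlb_map_inv L A B (zlb_map L A B y) = (zlb_map L A B y + B) / L"
    by (rule zlb_map_inv_below)
  then show ?thesis
    using L by (simp add: map)
qed

lemma zlb_map_zlb_map_inv [simp]: "zlb_map L A B (zlb_map_inv L A B z) = z"
proof (cases "- B * (L + A) / A \<le> z")
  case True
  then have "- B / A \<le> z / (L + A)"
    using L A by (simp add: field_simps)
  then have "zlb_map L A B (z / (L + A)) = (L + A) * (z / (L + A))"
    by (simp add: zlb_map_def zlb_above A distrib_right add_divide_distrib)
  with True show ?thesis
    using L A by (simp add: zlb_map_inv_above)
next
  case False
  then have "(z + B) / L \<le> - B / A"
    using L A by (simp add: field_simps)
  with False show ?thesis
    using L A by (simp add: zlb_map_inv_below zlb_map_def zlb_below A field_simps)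
qed

lemma zlb_map_mono: "y \<le> y' \<Longrightarrow> zlb_map L A B y \<le> zlb_map L A B y'"
  using L A unfolding zlb_map_def zlb_def
  by (intro add_mono max.mono mult_left_mono) auto

lemma zlb_map_inv_mono: "z \<le> z' \<Longrightarrow> zlb_map_inv L A B z \<le> zlb_map_inv L A B z'"
  using L A unfolding zlb_map_inv_def
  by (intro min.mono divide_right_mono) auto

lemma zlb_map_le_iff: "zlb_map L A B y \<le> zlb_map L A B y' \<longleftrightarrow> y \<le> y'"
  by (metis zlb_map_inv_mono zlb_map_inv_zlb_map zlb_map_mono)

lemma zlb_map_inv_nonneg: "0 \<le> z \<Longrightarrow> 0 \<le> zlb_map_inv L A B z"
  using L A B by (simp add: zlb_map_inv_def)

lemma zlb_map_inv_shift_below: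
  "e + g * t \<le> - B * (L + A) / A \<Longrightarrow> zlb_map_inv L A B (e + g * t) = (e + B) / L + g / L * t"
  using L A B by (simp add: zlb_map_inv_below field_simps)

lemma zlb_map_inv_shift_above:
  "- B * (L + A) / A \<le> e + g * t \<Longrightarrow> zlb_map_inv L A B (e + g * t) = e / (L + A) + g / (L + A) * t"
  by (simp add: zlb_map_inv_above add_divide_distrib)

end

section \<open>The fixed-point gap of a restricted-perceptions equilibrium\<close>

definition rpe_gap ::
  "real \<Rightarrow> real \<Rightarrow> real \<Rightarrow> real \<Rightarrow> real \<Rightarrow> real \<Rightarrow> real \<Rightarrow> real \<Rightarrow> real \<Rightarrow> real" where
  "rpe_gap L A B g w1 w2 e1 e2 t =
     w1 * zlb_map_inv L A B (e1 + g * t) + w2 * zlb_map_inv L A B (e2 + g * t) - t"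

lemma rpe_gap_swap: "rpe_gap L A B g w1 w2 e1 e2 t = rpe_gap L A B g w2 w1 e2 e1 t"
  by (simp add: rpe_gap_def)

lemma continuous_on_rpe_gap [continuous_intros]:
  assumes "L > 0" "A > 0" "continuous_on S e1" "continuous_on S e2" "continuous_on S t"
  shows "continuous_on S (\<lambda>x. rpe_gap L A B g w1 w2 (e1 x) (e2 x) (t x))"
  unfolding rpe_gap_def using assms by (intro continuous_intros) auto

lemma add_scaled_le_iff:
  fixes e g t z :: real
  assumes "0 < g" shows "e + g * t \<le> z \<longleftrightarrow> t \<le> (z - e) / g"
  using assms by (simp add: pos_le_divide_eq algebra_simps)

lemma le_add_scaled_iff:
  fixes e g t z :: real
  assumes "0 < g" shows "z \<le> e + g * t \<longleftrightarrow> (z - e) / g \<le> t"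
  using assms by (simp add: pos_divide_le_eq algebra_simps)

context
  fixes L A B g w1 w2 :: real
  assumes L: "L > 0" and A: "A > 0" and B: "B > 0" and g: "g > 0"
    and w: "0 \<le> w1" "0 \<le> w2" "w1 + w2 = 1"
begin

lemma rpe_gap_mono_shock: "e1 \<le> e1' \<Longrightarrow> rpe_gap L A B g w1 w2 e1 e2 t \<le> rpe_gap L A B g w1 w2 e1' e2 t"
  unfolding rpe_gap_def using L A B w by (simp add: mult_left_mono zlb_map_inv_mono)

lemma rpe_gap_le_affine:
  "rpe_gap L A B g w1 w2 e1 e2 t \<le> (w1 * e1 + w2 * e2) / (L + A) + (g / (L + A) - 1) * t"
proof -
  have "zlb_map_inv L A B (e + g * t) \<le> e / (L + A) + g / (L + A) * t" for e
    by (simp add: zlb_map_inv_def add_divide_distrib)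
  then have "rpe_gap L A B g w1 w2 e1 e2 t
      \<le> w1 * (e1 / (L + A) + g / (L + A) * t) + w2 * (e2 / (L + A) + g / (L + A) * t) - t"
    unfolding rpe_gap_def using w by (intro diff_right_mono add_mono mult_left_mono) auto
  also have "\<dots> = (w1 * e1 + w2 * e2) / (L + A) + (g / (L + A) - 1) * t"
    unfolding weighted_sum_affine[OF w(3)] by (simp add: add_divide_distrib)
  finally show ?thesis .
qed

lemma rpe_gap_eventually_nonpos:
  assumes "g < L + A"
  shows "\<exists>t \<ge> t0. rpe_gap L A B g w1 w2 e1 e2 t \<le> 0"
proof -
  define c where "c = 1 - g / (L + A)"
  define K where "K = (w1 * e1 + w2 * e2) / (L + A)"
  define t where "t = max t0 (K / c)"
  have "c > 0" using assms L A by (simp add: c_def field_simps)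
  moreover have "K / c \<le> t" by (simp add: t_def)
  ultimately have "K \<le> c * t" by (simp add: pos_divide_le_eq mult.commute)
  then have "rpe_gap L A B g w1 w2 e1 e2 t \<le> 0"
    using rpe_gap_le_affine[of e1 e2 t] by (simp add: c_def K_def algebra_simps)
  then show ?thesis by (intro exI[of _ t]) (simp add: t_def)
qed

lemma rpe_gap_root:
  assumes "g < L + A" "0 \<le> rpe_gap L A B g w1 w2 e1 e2 t0"
  shows "\<exists>t. rpe_gap L A B g w1 w2 e1 e2 t = 0"
proof -
  obtain t1 where "t0 \<le> t1" "rpe_gap L A B g w1 w2 e1 e2 t1 \<le> 0"
    using rpe_gap_eventually_nonpos assms(1) by blast
  moreover have "continuous_on {t0..t1} (rpe_gap L A B g w1 w2 e1 e2)"
    using L A by (intro continuous_intros) auto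
  ultimately show ?thesis using IVT2' assms(2) by blast
qed

lemma rpe_gap_below_kinks:
  assumes "e1 + g * t \<le> - B * (L + A) / A" "e2 + g * t \<le> - B * (L + A) / A"
  shows "rpe_gap L A B g w1 w2 e1 e2 t = w1 * ((e1 + B) / L) + w2 * ((e2 + B) / L) + (g / L - 1) * t"
  unfolding rpe_gap_def zlb_map_inv_shift_below[OF L A B assms(1)] zlb_map_inv_shift_below[OF L A B assms(2)]
    weighted_sum_affine[OF w(3)] ..

lemma rpe_gap_above_kinks:
  assumes "- B * (L + A) / A \<le> e1 + g * t" "- B * (L + A) / A \<le> e2 + g * t"
  shows "rpe_gap L A B g w1 w2 e1 e2 t = w1 * (e1 / (L + A)) + w2 * (e2 / (L + A)) + (g / (L + A) - 1) * t"
  unfolding rpe_gap_def zlb_map_inv_shift_above[OF L A B assms(1)] zlb_map_inv_shift_above[OF L A B assms(2)]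
    weighted_sum_affine[OF w(3)] ..

lemma rpe_gap_between_kinks:
  assumes "e1 + g * t \<le> - B * (L + A) / A" "- B * (L + A) / A \<le> e2 + g * t"
  shows "rpe_gap L A B g w1 w2 e1 e2 t
    = w1 * ((e1 + B) / L) + w2 * (e2 / (L + A)) + (w1 * g / L + w2 * g / (L + A) - 1) * t"
  using assms L A B by (simp add: rpe_gap_def zlb_map_inv_shift_below zlb_map_inv_shift_above algebra_simps)

lemma rpe_gap_exists_nonneg_if_slow:
  assumes "g < L"
  shows "\<exists>t. 0 \<le> rpe_gap L A B g w1 w2 e1 e2 t"
proof -
  define z0 where "z0 = - B * (L + A) / A"
  define c where "c = 1 - g / L"
  define K where "K = w1 * ((e1 + B) / L) + w2 * ((e2 + B) / L)"
  define t where "t = min (K / c) (min ((z0 - e1) / g) ((z0 - e2) / g))"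
  have "c > 0" using assms L by (simp add: c_def field_simps)
  moreover have "t \<le> K / c" by (simp add: t_def)
  ultimately have "c * t \<le> K" by (simp add: pos_le_divide_eq mult.commute)
  moreover have "e1 + g * t \<le> z0" "e2 + g * t \<le> z0"
    using add_scaled_le_iff[OF g] by (simp_all add: t_def)
  ultimately have "0 \<le> rpe_gap L A B g w1 w2 e1 e2 t"
    by (simp add: rpe_gap_below_kinks z0_def c_def K_def algebra_simps)
  then show ?thesis ..
qed

lemma rpe_gap_le_max_kinks_ordered:
  assumes "L \<le> g" "g < L + A" "e1 \<le> e2"
  defines "k \<equiv> \<lambda>e. (- B * (L + A) / A - e) / g"
  shows "rpe_gap L A B g w1 w2 e1 e2 t
    \<le> max (rpe_gap L A B g w1 w2 e1 e2 (k e1)) (rpe_gap L A B g w1 w2 e1 e2 (k e2))"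
proof -
  define z0 where "z0 = - B * (L + A) / A"
  have below: "e + g * s \<le> z0 \<longleftrightarrow> s \<le> k e" and above: "z0 \<le> e + g * s \<longleftrightarrow> k e \<le> s" for e s
    unfolding k_def z0_def by (simp_all only: add_scaled_le_iff[OF g] le_add_scaled_iff[OF g])
  note gap_below = rpe_gap_below_kinks[folded z0_def, unfolded below]
  note gap_above = rpe_gap_above_kinks[folded z0_def, unfolded above]
  note gap_between = rpe_gap_between_kinks[folded z0_def, unfolded below above]
  have "k e2 \<le> k e1"
    using assms(3) g by (simp add: k_def divide_right_mono)
  consider "t \<le> k e2" | "k e2 \<le> t" "t \<le> k e1" | "k e1 \<le> t"
    by linarith
  then show ?thesis
  proof cases
    case 1
    have "(g / L - 1) * t \<le> (g / L - 1) * k e2"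
      using 1 assms(1) L by (intro mult_left_mono) (auto simp: field_simps)
    with 1 \<open>k e2 \<le> k e1\<close> show ?thesis
      by (simp add: gap_below)
  next
    case 2
    with \<open>k e2 \<le> k e1\<close> show ?thesis
      using affine_le_max[OF 2] by (simp add: gap_between max.commute)
  next
    case 3
    have "(g / (L + A) - 1) * t \<le> (g / (L + A) - 1) * k e1"
      using 3 assms(2) L A by (intro mult_left_mono_neg) (auto simp: field_simps)
    with 3 \<open>k e2 \<le> k e1\<close> show ?thesis
      by (simp add: gap_above)
  qed
qed

end

(* For L <= g the gap is nondecreasing left of both kinks, nonincreasing right of both, and affine
   in between. *)
lemma rpe_gap_le_max_kinks:
  assumes "L > 0" "A > 0" "B > 0" "g > 0" "0 \<le> w1" "0 \<le> w2" "w1 + w2 = 1" "L \<le> g" "g < L + A"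
  defines "k \<equiv> \<lambda>e. (- B * (L + A) / A - e) / g"
  shows "rpe_gap L A B g w1 w2 e1 e2 t
    \<le> max (rpe_gap L A B g w1 w2 e1 e2 (k e1)) (rpe_gap L A B g w1 w2 e1 e2 (k e2))"
proof (cases "e1 \<le> e2")
  case True
  then show ?thesis using rpe_gap_le_max_kinks_ordered assms by blast
next
  case False
  then have "rpe_gap L A B g w2 w1 e2 e1 t
      \<le> max (rpe_gap L A B g w2 w1 e2 e1 (k e2)) (rpe_gap L A B g w2 w1 e2 e1 (k e1))"
    using rpe_gap_le_max_kinks_ordered[of L A B g w2 w1 e2 e1] assms by simp
  then show ?thesis by (simp add: rpe_gap_swap[of L A B g w1 w2] max.commute)
qed

lemma closed_rpe_gap_nonneg:
  assumes "L > 0" "A > 0" "B > 0" "g > 0" "0 \<le> w1" "0 \<le> w2" "w1 + w2 = 1" "L \<le> g" "g < L + A"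
  shows "closed {e1. \<exists>t. 0 \<le> rpe_gap L A B g w1 w2 e1 e2 t}"
proof -
  define k where "k e = (- B * (L + A) / A - e) / g" for e
  have "{e1. \<exists>t. 0 \<le> rpe_gap L A B g w1 w2 e1 e2 t}
      = {e1. 0 \<le> max (rpe_gap L A B g w1 w2 e1 e2 (k e1)) (rpe_gap L A B g w1 w2 e1 e2 (k e2))}"
    using rpe_gap_le_max_kinks[OF assms] order_trans unfolding k_def by (fastforce simp: le_max_iff_disj)
  moreover have "continuous_on UNIV
      (\<lambda>e1. max (rpe_gap L A B g w1 w2 e1 e2 (k e1)) (rpe_gap L A B g w1 w2 e1 e2 (k e2)))"
    unfolding k_def using assms(1,2,4) by (intro continuous_intros) auto
  ultimately show ?thesis
    by (simp add: closed_Collect_le continuous_on_const)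
qed

section \<open>Moving a BRE pair onto the BR-RPE curve\<close>

context
  fixes L A B d :: real
  assumes L: "L > 0" and A: "A > 0" and B: "B > 0" and d: "0 \<le> d" "d < A"
begin

lemma zlb_net_mono_above: "- B / A \<le> y \<Longrightarrow> y \<le> y' \<Longrightarrow> zlb_net A B d y \<le> zlb_net A B d y'"
  using mult_right_mono[of d A "y' - y"] L A B d
  by (simp add: zlb_net_def zlb_above A algebra_simps)

lemma zlb_net_antimono_below: "y' \<le> - B / A \<Longrightarrow> y \<le> y' \<Longrightarrow> zlb_net A B d y' \<le> zlb_net A B d y"
  using mult_left_mono[of y y' d] L A B d
  by (simp add: zlb_net_def zlb_below A)

lemma zlb_net_kink_le: "zlb_net A B d (- B / A) \<le> zlb_net A B d y"
  by (cases "- B / A \<le> y") (auto intro: zlb_net_mono_above zlb_net_antimono_below)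

lemma curve_point_le_ordered:
  assumes w: "0 \<le> w1" "0 \<le> w2" and e: "0 \<le> e" "e \<le> zlb_map L A B u1 - zlb_map L A B u2"
  shows "\<exists>z. w1 * zlb_net A B d (zlb_map_inv L A B (zlb_map L A B z + e)) + w2 * zlb_net A B d z
           \<le> w1 * zlb_net A B d u1 + w2 * zlb_net A B d u2"
proof -
  define h where "h = zlb_map L A B"
  define y0 where "y0 = - B / A"
  define zmax where "zmax = zlb_map_inv L A B (h u1 - e)"
  \<comment> \<open>the point of [u2, zmax] nearest to the kink y0\<close>
  define z where "z = max u2 (min y0 zmax)"
  define y1 where "y1 = zlb_map_inv L A B (h z + e)"
  have h_le: "h y \<le> h y' \<longleftrightarrow> y \<le> y'" for y y'
    unfolding h_def using L A B by (rule zlb_map_le_iff)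
  have h_zmax: "h zmax = h u1 - e" and h_y1: "h y1 = h z + e"
    unfolding zmax_def y1_def h_def using L A B by simp_all
  have "h u2 \<le> h zmax"
    using e(2) unfolding h_zmax by (simp add: h_def)
  then have "u2 \<le> zmax" by (simp add: h_le)
  then have "z \<le> zmax" by (simp add: z_def)
  have "zlb_net A B d z \<le> zlb_net A B d u2"
  proof (cases "z = u2")
    case False
    then have "u2 \<le> z" "z \<le> y0" by (auto simp: z_def)
    then show ?thesis using zlb_net_antimono_below y0_def by blast
  qed simp
  moreover have "zlb_net A B d y1 \<le> zlb_net A B d u1"
  proof (cases "z = zmax")
    case True
    then have "y1 = u1"
      using h_le[of y1 u1] h_le[of u1 y1] by (simp add: h_y1 h_zmax)
    then show ?thesis by simp
  next
    case False
    then have "y0 \<le> z" using \<open>z \<le> zmax\<close> by (auto simp: z_def)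
    moreover have "z \<le> y1" "y1 \<le> u1"
      using e(1) \<open>z \<le> zmax\<close> h_le[of z y1] h_le[of y1 u1] h_le[of z zmax]
      by (simp_all add: h_y1 h_zmax)
    ultimately show ?thesis using zlb_net_mono_above y0_def by (meson order_trans)
  qed
  ultimately show ?thesis
    using weighted_sum_mono[OF w] unfolding y1_def h_def by blast
qed

lemma reversed_pair_below_kink:
  assumes \<kappa>: "\<kappa> \<le> L + d" and "u1 < u2" and e: "0 \<le> e"
    and u: "zlb_map L A B u1 - zlb_map L A B u2 - \<kappa> * (u1 - u2) = e"
  shows "u1 < - B / A" "e \<le> d * (- B / A - u1)"
proof -
  define y0 where "y0 = - B / A"
  have e_eq: "e = (\<kappa> - L) * (u2 - u1) + zlb A B u1 - zlb A B u2"
    using u by (simp add: zlb_map_def algebra_simps)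
  show "u1 < - B / A"
  proof (rule ccontr)
    assume "\<not> u1 < - B / A"
    then have "zlb A B u1 = A * u1" "zlb A B u2 = A * u2"
      using \<open>u1 < u2\<close> by (simp_all add: zlb_above A)
    then have "e = (L + A - \<kappa>) * (u1 - u2)"
      by (simp add: e_eq algebra_simps)
    moreover have "(L + A - \<kappa>) * (u1 - u2) < 0"
      using \<kappa> d \<open>u1 < u2\<close> by (intro mult_pos_neg) auto
    ultimately show False using e by simp
  qed
  have "(\<kappa> - L) * (u2 - u1) \<le> d * (u2 - u1)"
    using \<kappa> \<open>u1 < u2\<close> by (intro mult_right_mono) auto
  moreover have "d * (u2 - y0) \<le> B + zlb A B u2"
  proof (cases "y0 \<le> u2")
    case True
    then have "d * (u2 - y0) \<le> A * (u2 - y0)" using d by (intro mult_right_mono) auto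
    with True show ?thesis using A by (simp add: zlb_above y0_def algebra_simps)
  next
    case False
    then show ?thesis using d by (simp add: zlb_below A y0_def mult_nonneg_nonpos)
  qed
  ultimately show "e \<le> d * (- B / A - u1)"
    using \<open>u1 < - B / A\<close> by (simp add: e_eq zlb_below A y0_def algebra_simps)
qed

lemma curve_point_le_reversed:
  assumes w: "0 \<le> w1" "0 \<le> w2" and \<kappa>: "\<kappa> \<le> L + d" and "u1 < u2" and e: "0 \<le> e"
    and u: "zlb_map L A B u1 - zlb_map L A B u2 - \<kappa> * (u1 - u2) = e"
  shows "\<exists>z. w1 * zlb_net A B d (zlb_map_inv L A B (zlb_map L A B z + e)) + w2 * zlb_net A B d z
           \<le> w1 * zlb_net A B d u1 + w2 * zlb_net A B d u2"
proof -
  define y0 where "y0 = - B / A"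
  define v where "v = e / (L + A)"
  have u1: "u1 < y0" "e \<le> d * (y0 - u1)"
    using reversed_pair_below_kink[OF \<kappa> \<open>u1 < u2\<close> e u] by (simp_all add: y0_def)
  have "y0 \<le> y0 + v" using e L A by (simp add: v_def)
  then have zlb_y0: "zlb A B (y0 + v) = A * (y0 + v)" "zlb A B y0 = A * y0"
    using A by (simp_all add: zlb_above y0_def)
  then have "zlb_map L A B (y0 + v) = zlb_map L A B y0 + (L + A) * v"
    by (simp add: zlb_map_def algebra_simps)
  also have Lv: "(L + A) * v = e"
    using L A by (simp add: v_def)
  finally have "zlb_map L A B (y0 + v) = zlb_map L A B y0 + e" .
  then have y1: "zlb_map_inv L A B (zlb_map L A B y0 + e) = y0 + v"
    by (metis L A B zlb_map_inv_zlb_map)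
  have "(A - d) * v \<le> (L + A) * v"
    using e L d by (intro mult_right_mono) (auto simp: v_def)
  moreover have "zlb_net A B d (y0 + v) = zlb_net A B d y0 + (A - d) * v"
    unfolding zlb_net_def zlb_y0 by (simp add: algebra_simps)
  moreover have "zlb_net A B d u1 = zlb_net A B d y0 + d * (y0 - u1)"
    using u1(1) A by (simp add: zlb_net_def zlb_y0 zlb_below y0_def algebra_simps)
  ultimately have "zlb_net A B d (y0 + v) \<le> zlb_net A B d u1"
    using Lv u1(2) by linarith
  then have "w1 * zlb_net A B d (zlb_map_inv L A B (zlb_map L A B y0 + e)) + w2 * zlb_net A B d y0
      \<le> w1 * zlb_net A B d u1 + w2 * zlb_net A B d u2"
    unfolding y1 using weighted_sum_mono[OF w] zlb_net_kink_le y0_def by blast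
  then show ?thesis ..
qed

lemma curve_point_le:
  assumes w: "0 \<le> w1" "0 \<le> w2" and \<kappa>: "0 \<le> \<kappa>" "\<kappa> \<le> L + d" and e: "0 \<le> e"
    and u: "zlb_map L A B u1 - zlb_map L A B u2 - \<kappa> * (u1 - u2) = e"
  shows "\<exists>z. w1 * zlb_net A B d (zlb_map_inv L A B (zlb_map L A B z + e)) + w2 * zlb_net A B d z
           \<le> w1 * zlb_net A B d u1 + w2 * zlb_net A B d u2"
proof (cases "u2 \<le> u1")
  case True
  then have "0 \<le> \<kappa> * (u1 - u2)"
    using \<kappa>(1) by simp
  then have "e \<le> zlb_map L A B u1 - zlb_map L A B u2"
    using u by linarith
  then show ?thesis by (rule curve_point_le_ordered[OF w e])
next
  case False
  then show ?thesis using curve_point_le_reversed[OF w \<kappa>(2) _ e u] by simp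
qed

(* Along the curve, parametrized by z = y2, the averaged value tends to infinity, so a point of
   the curve at or below the target gives one exactly on it. *)
lemma curve_point_eq:
  assumes w: "0 \<le> w1" "0 \<le> w2" "w1 + w2 = 1" and e: "0 \<le> e"
    and z0: "w1 * zlb_net A B d (zlb_map_inv L A B (zlb_map L A B z0 + e)) + w2 * zlb_net A B d z0 \<le> T"
  shows "\<exists>y1 y2. zlb_map L A B y1 - zlb_map L A B y2 = e \<and>
           w1 * zlb_net A B d y1 + w2 * zlb_net A B d y2 = T"
proof -
  define ph where "ph z = w1 * zlb_net A B d (zlb_map_inv L A B (zlb_map L A B z + e)) + w2 * zlb_net A B d z" for z
  define z1 where "z1 = max z0 (max (- B / A) (T / (A - d)))"
  have "- B / A \<le> z1" "z0 \<le> z1" "T / (A - d) \<le> z1"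
    by (simp_all add: z1_def)
  have "z1 \<le> zlb_map_inv L A B (zlb_map L A B z1 + e)"
    using zlb_map_le_iff[OF L A B, of z1 "zlb_map_inv L A B (zlb_map L A B z1 + e)"] L A B e by simp
  then have "zlb_net A B d z1 \<le> zlb_net A B d (zlb_map_inv L A B (zlb_map L A B z1 + e))"
    using \<open>- B / A \<le> z1\<close> zlb_net_mono_above by blast
  then have "w1 * zlb_net A B d z1 + w2 * zlb_net A B d z1 \<le> ph z1"
    unfolding ph_def by (rule weighted_sum_mono[OF w(1,2)]) simp
  moreover have "w1 * zlb_net A B d z1 + w2 * zlb_net A B d z1 = (w1 + w2) * zlb_net A B d z1"
    by (rule distrib_right[symmetric])
  moreover have "zlb_net A B d z1 = (A - d) * z1"
    using A \<open>- B / A \<le> z1\<close> by (simp add: zlb_net_def zlb_above algebra_simps)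
  moreover have "T \<le> (A - d) * z1"
    using d \<open>T / (A - d) \<le> z1\<close> by (simp add: pos_divide_le_eq mult.commute)
  ultimately have "T \<le> ph z1" using w(3) by simp
  moreover have "ph z0 \<le> T" using z0 by (simp add: ph_def)
  moreover have "continuous_on {z0..z1} ph"
    unfolding ph_def using L A by (intro continuous_intros) auto
  ultimately obtain z where "ph z = T"
    using IVT'[of ph z0 T z1] \<open>z0 \<le> z1\<close> by blast
  then show ?thesis
    using L A B by (intro exI[of _ "zlb_map_inv L A B (zlb_map L A B z + e)"] exI[of _ z]) (simp add: ph_def)
qed

lemma rpe_pair_of_bre_pair:
  assumes w: "0 \<le> w1" "0 \<le> w2" "w1 + w2 = 1" and \<kappa>: "0 \<le> \<kappa>" "\<kappa> \<le> L + d"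
    and u: "zlb_map L A B u1 - zlb_map L A B u2 - \<kappa> * (u1 - u2) = e"
  shows "\<exists>y1 y2. zlb_map L A B y1 - zlb_map L A B y2 = e \<and>
           w1 * zlb_net A B d y1 + w2 * zlb_net A B d y2 = w1 * zlb_net A B d u1 + w2 * zlb_net A B d u2"
proof (cases "0 \<le> e")
  case True
  then show ?thesis
    using curve_point_le[OF w(1,2) \<kappa> True u] curve_point_eq[OF w True] by blast
next
  case False
  have u': "zlb_map L A B u2 - zlb_map L A B u1 - \<kappa> * (u2 - u1) = - e"
    using u by (simp add: algebra_simps)
  have w': "0 \<le> w2" "0 \<le> w1" "w2 + w1 = 1" using w by auto
  have "0 \<le> - e" using False by simp
  then obtain y1 y2 where "zlb_map L A B y1 - zlb_map L A B y2 = - e"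
    "w2 * zlb_net A B d y1 + w1 * zlb_net A B d y2 = w2 * zlb_net A B d u2 + w1 * zlb_net A B d u1"
    using curve_point_le[OF w'(1,2) \<kappa> _ u'] curve_point_eq[OF w'] by blast
  then show ?thesis by (intro exI[of _ y2] exI[of _ y1]) auto
qed

end

section \<open>Existence thresholds\<close>

lemma threshold_of_closed_up_set:
  fixes S :: "real set"
  assumes "closed S" "S \<noteq> {}" and up: "\<And>x y. x \<in> S \<Longrightarrow> x \<le> y \<Longrightarrow> y \<in> S"
  obtains e :: ereal where "e \<noteq> \<infinity>" "\<And>x. x \<in> S \<longleftrightarrow> e \<le> ereal x"
proof (cases "bdd_below S")
  case True
  then have "Inf S \<in> S" using closed_contains_Inf assms(1,2) by blast
  then have "x \<in> S \<longleftrightarrow> Inf S \<le> x" for x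
    using up cInf_lower[OF _ True] by blast
  then show ?thesis using that[of "ereal (Inf S)"] by simp
next
  case False
  have "x \<in> S" for x
  proof -
    obtain s where "s \<in> S" "s < x" using False by (meson bdd_below_def not_le)
    then show ?thesis using up by simp
  qed
  then show ?thesis using that[of "-\<infinity>"] by simp
qed

lemma ereal_le_all_real_iff: "(\<forall>x. e \<le> ereal x) \<longleftrightarrow> e = -\<infinity>"
proof (cases e)
  case (real r)
  then show ?thesis by (auto intro: exI[of _ "r - 1"])
qed (auto dest: spec[of _ 0])

lemma threshold_mono:
  fixes a b :: ereal
  assumes "a \<noteq> \<infinity>" "\<forall>x. P x \<longleftrightarrow> a \<le> ereal x" "\<forall>x. Q x \<longleftrightarrow> b \<le> ereal x"
    "\<forall>x. P x \<longrightarrow> Q x"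
  shows "b \<le> a"
proof (cases a)
  case (real r)
  then have "P r" using assms(2) by simp
  then show ?thesis using assms(3,4) real by simp
next
  case MInf
  then have "\<forall>x. b \<le> ereal x" using assms(2-4) by simp
  then show ?thesis by (simp add: ereal_le_all_real_iff)
qed (use assms(1) in simp)

section \<open>The model in terms of inflation\<close>

lemma solves_state_iff:
  assumes lam: "lam > 0" and sig: "sig \<ge> 0"
  shows "solves_state bet sig lam mu psi M Mf N eps x y xe pe \<longleftrightarrow>
    x = (y - Mf * bet * pe) / lam \<and>
    zlb_map (1 / lam) (sig * psi) (sig * mu) y = eps + M * xe + (Mf * bet / lam + sig * N) * pe"
proof -
  define I where "I = max (psi * y) (- mu)"
  have map: "zlb_map (1 / lam) (sig * psi) (sig * mu) y = y / lam + sig * I"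
    using sig by (simp add: zlb_map_def zlb_def I_def max_mult_distrib_left)
  have x: "y = lam * x + Mf * bet * pe \<longleftrightarrow> x = (y - Mf * bet * pe) / lam"
    using lam by (auto simp: field_simps)
  have lin: "(y - Mf * bet * pe) / lam = M * xe - sig * (I - N * pe) + eps \<longleftrightarrow>
      y / lam + sig * I = eps + M * xe + (Mf * bet / lam + sig * N) * pe"
    using lam by (auto simp: field_simps)
  show ?thesis
    unfolding solves_state_def Let_def I_def[symmetric] map x using lin by auto
qed

lemma weighted_zlb_map_minus_linear:
  assumes "g = L + d" "w1 + w2 = 1"
  shows "w1 * zlb_map L A B y1 + w2 * zlb_map L A B y2 - g * (w1 * y1 + w2 * y2)
    = w1 * zlb_net A B d y1 + w2 * zlb_net A B d y2"
  using assms by (simp add: zlb_map_def zlb_net_def algebra_simps)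

locale nk_model =
  fixes bet sig lam mu psi M Mf N p q :: real
  assumes bet: "0 < bet" "bet < 1" and sig: "0 < sig" and lam: "0 < lam" and mu: "0 < mu"
    and psi: "1 < psi" and M: "0 < M" "M \<le> 1" and Mf: "0 < Mf" "Mf \<le> 1"
    and N: "0 < N" "N \<le> 1" and p: "0 < p" "p \<le> 1" and q: "0 < q" "q \<le> 1"
    and not_both_one: "(p, q) \<noteq> (1, 1)"
begin

abbreviation "bre_exists \<equiv> BRE_exists bet sig lam mu psi M Mf N p q"
abbreviation "rpe_exists \<equiv> BRRPE_exists bet sig lam mu psi M Mf N p q"

(* qb is the stationary probability of state 2 and rho = p + q - 1 the autocorrelation of the
   shock; kappa is the coefficient of y1 - y2 contributed by the BRE forecasts to the difference of
   the two states' equations. *)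
definition "delta = (M - 1) * (1 - Mf * bet) + lam * sig * N"
definition "qb = (1 - p) / (2 - p - q)"
definition "L = 1 / lam"
definition "A = sig * psi"
definition "B = sig * mu"
definition "d = delta / lam"
definition "g = (1 + delta) / lam"
definition "rho = p + q - 1"
definition "\<kappa> = rho * (M * (1 - Mf * bet * rho) / lam + Mf * bet / lam + sig * N)"

lemma LAB_pos: "L > 0" "A > 0" "B > 0"
  using lam sig mu psi by (simp_all add: L_def A_def B_def)

lemma g_eq: "g = L + d"
  by (simp add: g_def L_def d_def add_divide_distrib)

lemma delta_bounds: "- 1 < delta" "delta < lam * sig * psi"
proof -
  have "Mf * bet \<le> 1 * bet"
    using bet Mf by (intro mult_right_mono) auto
  then have "0 < 1 - Mf * bet"
    using bet by linarith
  then have "-1 * (1 - Mf * bet) < (M - 1) * (1 - Mf * bet)" "(M - 1) * (1 - Mf * bet) \<le> 0"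
    using M by (intro mult_strict_right_mono mult_nonpos_nonneg; simp)+
  moreover have "0 < lam * sig * N" "lam * sig * N < lam * sig * psi"
    using lam sig N psi by simp_all
  moreover have "0 < Mf * bet"
    using Mf bet by simp
  ultimately show "- 1 < delta" "delta < lam * sig * psi"
    by (simp_all add: delta_def)
qed

lemma g_bounds: "0 < g" "g < L + A"
proof -
  show "0 < g" using delta_bounds lam by (simp add: g_def)
  have "(1 + delta) / lam < (1 + lam * sig * psi) / lam"
    using delta_bounds lam by (simp add: divide_strict_right_mono)
  then show "g < L + A"
    using lam by (simp add: g_def L_def A_def add_divide_distrib)
qed

lemma d_less_A: "d < A"
  using g_bounds g_eq by simp

lemma qb_bounds: "0 < 2 - p - q" "0 \<le> qb" "qb \<le> 1"
proof -
  show pq: "0 < 2 - p - q" using p q not_both_one by auto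
  then show "0 \<le> qb" "qb \<le> 1" using p q by (simp_all add: qb_def field_simps)
qed

lemma qb_stationary: "(1 - qb) * (1 - p) = qb * (1 - q)"
proof -
  have "1 - qb = (1 - q) / (2 - p - q)"
    using qb_bounds(1) by (simp add: qb_def field_simps)
  then show ?thesis by (simp add: qb_def)
qed

lemma qb_weights: "0 \<le> 1 - qb" "0 \<le> qb" "(1 - qb) + qb = 1"
  using qb_bounds by auto

lemma forecast_coefficient: "M * (1 - Mf * bet) / lam + (Mf * bet / lam + sig * N) = g"
  using lam by (simp add: g_def delta_def field_simps)

lemma solves_state_common_forecast:
  assumes pe: "pe = qb * y2 + (1 - qb) * y1"
    and x: "x1 = (y1 - Mf * bet * pe) / lam" "x2 = (y2 - Mf * bet * pe) / lam" "x = (y - Mf * bet * pe) / lam"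
  shows "solves_state bet sig lam mu psi M Mf N e x y (qb * x2 + (1 - qb) * x1) pe
    \<longleftrightarrow> zlb_map L A B y - g * pe = e"
proof -
  have "qb * x2 + (1 - qb) * x1 = (qb * y2 + (1 - qb) * y1 - Mf * bet * pe) / lam"
    unfolding x(1,2) using lam by (simp add: field_simps)
  also have "\<dots> = (1 - Mf * bet) * pe / lam"
    unfolding pe[symmetric] by (simp add: algebra_simps)
  finally have "M * (qb * x2 + (1 - qb) * x1) + (Mf * bet / lam + sig * N) * pe = g * pe"
    unfolding forecast_coefficient[symmetric] by (simp add: algebra_simps)
  then show ?thesis
    using x(3) by (auto simp: solves_state_iff[OF lam less_imp_le[OF sig]] L_def A_def B_def)
qed

lemma rpe_exists_iff:
  "rpe_exists e1 e2 \<longleftrightarrow> (\<exists>y1 y2.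
     zlb_map L A B y1 - g * (qb * y2 + (1 - qb) * y1) = e1 \<and>
     zlb_map L A B y2 - g * (qb * y2 + (1 - qb) * y1) = e2)"
proof
  assume "rpe_exists e1 e2"
  then obtain x1 y1 x2 y2 where
    S: "solves_state bet sig lam mu psi M Mf N e1 x1 y1 (qb * x2 + (1 - qb) * x1) (qb * y2 + (1 - qb) * y1)"
      "solves_state bet sig lam mu psi M Mf N e2 x2 y2 (qb * x2 + (1 - qb) * x1) (qb * y2 + (1 - qb) * y1)"
    unfolding BRRPE_exists_def qb_def[symmetric] Let_def by blast
  then have "x1 = (y1 - Mf * bet * (qb * y2 + (1 - qb) * y1)) / lam"
      "x2 = (y2 - Mf * bet * (qb * y2 + (1 - qb) * y1)) / lam"
    by (simp_all add: solves_state_iff[OF lam less_imp_le[OF sig]])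
  with S show "\<exists>y1 y2. zlb_map L A B y1 - g * (qb * y2 + (1 - qb) * y1) = e1 \<and>
      zlb_map L A B y2 - g * (qb * y2 + (1 - qb) * y1) = e2"
    using solves_state_common_forecast[OF refl] by blast
next
  assume "\<exists>y1 y2. zlb_map L A B y1 - g * (qb * y2 + (1 - qb) * y1) = e1 \<and>
      zlb_map L A B y2 - g * (qb * y2 + (1 - qb) * y1) = e2"
  then obtain y1 y2 where eq: "zlb_map L A B y1 - g * (qb * y2 + (1 - qb) * y1) = e1"
      "zlb_map L A B y2 - g * (qb * y2 + (1 - qb) * y1) = e2" by blast
  define pe where "pe = qb * y2 + (1 - qb) * y1"
  define x1 where "x1 = (y1 - Mf * bet * pe) / lam"
  define x2 where "x2 = (y2 - Mf * bet * pe) / lam"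
  have "solves_state bet sig lam mu psi M Mf N e1 x1 y1 (qb * x2 + (1 - qb) * x1) pe"
      "solves_state bet sig lam mu psi M Mf N e2 x2 y2 (qb * x2 + (1 - qb) * x1) pe"
    using solves_state_common_forecast[OF pe_def x1_def x2_def x1_def]
      solves_state_common_forecast[OF pe_def x1_def x2_def x2_def] eq
    by (simp_all add: pe_def)
  then show "rpe_exists e1 e2"
    unfolding BRRPE_exists_def qb_def[symmetric] Let_def pe_def by blast
qed

lemma rpe_exists_iff_gap: "rpe_exists e1 e2 \<longleftrightarrow> (\<exists>t. 0 \<le> rpe_gap L A B g (1 - qb) qb e1 e2 t)"
proof
  assume "rpe_exists e1 e2"
  then obtain y1 y2 where "e1 + g * (qb * y2 + (1 - qb) * y1) = zlb_map L A B y1"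
      "e2 + g * (qb * y2 + (1 - qb) * y1) = zlb_map L A B y2"
    unfolding rpe_exists_iff by (metis diff_add_cancel add.commute)
  then have "rpe_gap L A B g (1 - qb) qb e1 e2 (qb * y2 + (1 - qb) * y1) = 0"
    using zlb_map_inv_zlb_map[OF LAB_pos] by (simp add: rpe_gap_def)
  then show "\<exists>t. 0 \<le> rpe_gap L A B g (1 - qb) qb e1 e2 t"
    by (metis order_refl)
next
  assume "\<exists>t. 0 \<le> rpe_gap L A B g (1 - qb) qb e1 e2 t"
  then obtain t where t: "rpe_gap L A B g (1 - qb) qb e1 e2 t = 0"
    using rpe_gap_root[OF LAB_pos g_bounds(1) qb_weights g_bounds(2)] by blast
  define y1 where "y1 = zlb_map_inv L A B (e1 + g * t)"
  define y2 where "y2 = zlb_map_inv L A B (e2 + g * t)"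
  have "qb * y2 + (1 - qb) * y1 = t"
    using t by (simp add: rpe_gap_def y1_def y2_def)
  moreover have "zlb_map L A B y1 = e1 + g * t" "zlb_map L A B y2 = e2 + g * t"
    using zlb_map_zlb_map_inv[OF LAB_pos] by (simp_all add: y1_def y2_def)
  ultimately show "rpe_exists e1 e2"
    unfolding rpe_exists_iff by (intro exI[of _ y1] exI[of _ y2]) simp
qed

lemma rpe_exists_if_delta_neg: "delta < 0 \<Longrightarrow> rpe_exists e1 e2"
  using rpe_gap_exists_nonneg_if_slow[OF LAB_pos g_bounds(1) qb_weights] lam
  by (simp add: rpe_exists_iff_gap g_def L_def divide_strict_right_mono)

lemma rpe_threshold:
  assumes "0 \<le> e2"
  obtains eR :: ereal where "eR \<noteq> \<infinity>" "\<forall>e1. rpe_exists e1 e2 \<longleftrightarrow> eR \<le> ereal e1"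
    "delta < 0 \<Longrightarrow> eR = -\<infinity>"
proof -
  have closed: "closed {e1. rpe_exists e1 e2}"
  proof (cases "delta < 0")
    case True
    then show ?thesis using rpe_exists_if_delta_neg by simp
  next
    case False
    then have "L \<le> g" using g_eq lam by (simp add: d_def)
    then show ?thesis
      using closed_rpe_gap_nonneg[OF LAB_pos g_bounds(1) qb_weights _ g_bounds(2)]
      by (simp add: rpe_exists_iff_gap)
  qed
  have "0 \<le> rpe_gap L A B g (1 - qb) qb 0 e2 0"
    using zlb_map_inv_nonneg[OF LAB_pos] assms qb_weights by (simp add: rpe_gap_def)
  then have nonempty: "{e1. rpe_exists e1 e2} \<noteq> {}"
    by (auto simp: rpe_exists_iff_gap)
  have up: "y \<in> {e1. rpe_exists e1 e2}" if "x \<in> {e1. rpe_exists e1 e2}" "x \<le> y" for x y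
    using that rpe_gap_mono_shock[OF LAB_pos g_bounds(1) qb_weights] order_trans
    by (simp add: rpe_exists_iff_gap) blast
  show ?thesis
  proof (rule threshold_of_closed_up_set[OF closed nonempty up])
    fix eR
    assume eR: "eR \<noteq> \<infinity>" "\<And>e1. e1 \<in> {e1. rpe_exists e1 e2} \<longleftrightarrow> eR \<le> ereal e1"
    moreover have "eR = -\<infinity>" if "delta < 0"
    proof -
      have "\<forall>e1. eR \<le> ereal e1" using eR(2) rpe_exists_if_delta_neg[OF that] by simp
      then show ?thesis by (simp add: ereal_le_all_real_iff)
    qed
    ultimately show thesis using that by simp
  qed
qed

lemma bre_exists_E:
  assumes "bre_exists e1 e2"
  obtains x1 y1 x2 y2 where
    "x1 = (y1 - Mf * bet * (p * y1 + (1 - p) * y2)) / lam"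
    "x2 = (y2 - Mf * bet * ((1 - q) * y1 + q * y2)) / lam"
    "zlb_map L A B y1 = e1 + M * (p * x1 + (1 - p) * x2) + (Mf * bet / lam + sig * N) * (p * y1 + (1 - p) * y2)"
    "zlb_map L A B y2 = e2 + M * ((1 - q) * x1 + q * x2) + (Mf * bet / lam + sig * N) * ((1 - q) * y1 + q * y2)"
  using assms by (auto simp: BRE_exists_def solves_state_iff[OF lam less_imp_le[OF sig]] L_def A_def B_def)

lemma bre_difference:
  assumes x1: "x1 = (y1 - Mf * bet * (p * y1 + (1 - p) * y2)) / lam"
    and x2: "x2 = (y2 - Mf * bet * ((1 - q) * y1 + q * y2)) / lam"
    and h1: "zlb_map L A B y1 = e1 + M * (p * x1 + (1 - p) * x2) + (Mf * bet / lam + sig * N) * (p * y1 + (1 - p) * y2)"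
    and h2: "zlb_map L A B y2 = e2 + M * ((1 - q) * x1 + q * x2) + (Mf * bet / lam + sig * N) * ((1 - q) * y1 + q * y2)"
  shows "zlb_map L A B y1 - zlb_map L A B y2 - \<kappa> * (y1 - y2) = e1 - e2"
proof -
  have forecast_diff: "(p * z1 + (1 - p) * z2) - ((1 - q) * z1 + q * z2) = rho * (z1 - z2)" for z1 z2
    by (simp add: rho_def algebra_simps)
  have xdiff: "x1 - x2 = (1 - Mf * bet * rho) * (y1 - y2) / lam"
    unfolding x1 x2 rho_def using lam by (simp add: field_simps)
  have "M * ((p * x1 + (1 - p) * x2) - ((1 - q) * x1 + q * x2))
      + (Mf * bet / lam + sig * N) * ((p * y1 + (1 - p) * y2) - ((1 - q) * y1 + q * y2)) = \<kappa> * (y1 - y2)"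
    unfolding forecast_diff mult.left_commute[of M rho] xdiff \<kappa>_def using lam by (simp add: field_simps)
  then show ?thesis
    unfolding h1 h2 by (simp only: right_diff_distrib)
qed

lemma bre_average:
  assumes x1: "x1 = (y1 - Mf * bet * (p * y1 + (1 - p) * y2)) / lam"
    and x2: "x2 = (y2 - Mf * bet * ((1 - q) * y1 + q * y2)) / lam"
    and h1: "zlb_map L A B y1 = e1 + M * (p * x1 + (1 - p) * x2) + (Mf * bet / lam + sig * N) * (p * y1 + (1 - p) * y2)"
    and h2: "zlb_map L A B y2 = e2 + M * ((1 - q) * x1 + q * x2) + (Mf * bet / lam + sig * N) * ((1 - q) * y1 + q * y2)"
  shows "(1 - qb) * zlb_net A B d y1 + qb * zlb_net A B d y2 = (1 - qb) * e1 + qb * e2"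
proof -
  define \<tau> where "\<tau> = (1 - qb) * y1 + qb * y2"
  define c where "c = Mf * bet / lam + sig * N"
  have pe: "(1 - qb) * (p * y1 + (1 - p) * y2) + qb * ((1 - q) * y1 + q * y2) = \<tau>"
    unfolding \<tau>_def by (rule stationary_weights_average[OF qb_stationary])
  have "(1 - qb) * (p * x1 + (1 - p) * x2) + qb * ((1 - q) * x1 + q * x2) = (1 - qb) * x1 + qb * x2"
    by (rule stationary_weights_average[OF qb_stationary])
  also have "\<dots> = (\<tau> - Mf * bet * ((1 - qb) * (p * y1 + (1 - p) * y2) + qb * ((1 - q) * y1 + q * y2))) / lam"
    unfolding x1 x2 \<tau>_def using lam by (simp add: field_simps)
  finally have xe: "(1 - qb) * (p * x1 + (1 - p) * x2) + qb * ((1 - q) * x1 + q * x2)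
      = (1 - Mf * bet) * \<tau> / lam"
    unfolding pe by (simp add: algebra_simps)
  have "(1 - qb) * zlb_map L A B y1 + qb * zlb_map L A B y2
      = (1 - qb) * e1 + qb * e2 + M * ((1 - qb) * (p * x1 + (1 - p) * x2) + qb * ((1 - q) * x1 + q * x2))
        + c * ((1 - qb) * (p * y1 + (1 - p) * y2) + qb * ((1 - q) * y1 + q * y2))"
    unfolding h1[folded c_def] h2[folded c_def] by (simp add: algebra_simps)
  also have "\<dots> = (1 - qb) * e1 + qb * e2 + g * \<tau>"
    unfolding xe pe forecast_coefficient[symmetric] c_def by (simp add: algebra_simps)
  finally show ?thesis
    unfolding weighted_zlb_map_minus_linear[OF g_eq qb_weights(3), symmetric] \<tau>_def by simp
qed

lemma kappa_bounds:
  assumes "1 \<le> p + q"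
  shows "0 \<le> \<kappa>" "\<kappa> \<le> L + d"
proof -
  have rho: "0 \<le> rho" "rho \<le> 1" using assms p q by (simp_all add: rho_def)
  have a: "0 \<le> Mf * bet" "Mf * bet \<le> 1" using Mf bet mult_mono[of Mf 1 bet 1] by simp_all
  have "Mf * bet * rho \<le> Mf * bet" "M * rho \<le> M"
    using mult_left_mono[OF rho(2), of "Mf * bet"] mult_left_mono[OF rho(2), of M] a M by simp_all
  then have le: "Mf * bet * rho \<le> 1" "1 - Mf * bet \<le> 1 - Mf * bet * rho" "1 - M \<le> 1 - M * rho"
    using a by simp_all
  show "0 \<le> \<kappa>"
    unfolding \<kappa>_def using rho M a le(1) lam sig N by (intro mult_nonneg_nonneg add_nonneg_nonneg) auto
  have "(1 - Mf * bet) * (1 - M) \<le> (1 - Mf * bet * rho) * (1 - M * rho)"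
    using le a M by (intro mult_mono) auto
  moreover have "g - \<kappa> = ((1 - Mf * bet * rho) * (1 - M * rho) - (1 - Mf * bet) * (1 - M)) / lam
      + (1 - rho) * sig * N"
    unfolding g_def delta_def \<kappa>_def using lam by (simp add: field_simps)
  ultimately have "0 \<le> g - \<kappa>"
    using lam rho sig N by (simp add: add_nonneg_nonneg)
  then show "\<kappa> \<le> L + d" using g_eq by simp
qed

lemma bre_imp_rpe:
  assumes "(0 \<le> delta \<and> 1 \<le> p + q) \<or> delta < 0" and bre: "bre_exists e1 e2"
  shows "rpe_exists e1 e2"
  using assms(1)
proof (elim disjE conjE)
  assume "0 \<le> delta" "1 \<le> p + q"
  obtain x1 y1 x2 y2 where eqs:
    "x1 = (y1 - Mf * bet * (p * y1 + (1 - p) * y2)) / lam"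
    "x2 = (y2 - Mf * bet * ((1 - q) * y1 + q * y2)) / lam"
    "zlb_map L A B y1 = e1 + M * (p * x1 + (1 - p) * x2) + (Mf * bet / lam + sig * N) * (p * y1 + (1 - p) * y2)"
    "zlb_map L A B y2 = e2 + M * ((1 - q) * x1 + q * x2) + (Mf * bet / lam + sig * N) * ((1 - q) * y1 + q * y2)"
    by (rule bre_exists_E[OF bre])
  have "0 \<le> d" using \<open>0 \<le> delta\<close> lam by (simp add: d_def)
  obtain z1 z2 where diff: "zlb_map L A B z1 - zlb_map L A B z2 = e1 - e2"
    and "(1 - qb) * zlb_net A B d z1 + qb * zlb_net A B d z2 = (1 - qb) * e1 + qb * e2"
    using rpe_pair_of_bre_pair[OF LAB_pos \<open>0 \<le> d\<close> d_less_A qb_weights kappa_bounds[OF \<open>1 \<le> p + q\<close>]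
        bre_difference[OF eqs]] bre_average[OF eqs]
    by auto
  then have "(1 - qb) * zlb_map L A B z1 + qb * zlb_map L A B z2 - g * ((1 - qb) * z1 + qb * z2)
      = (1 - qb) * e1 + qb * e2"
    by (simp add: weighted_zlb_map_minus_linear[OF g_eq qb_weights(3)])
  with diff have "zlb_map L A B z1 - g * ((1 - qb) * z1 + qb * z2) = e1"
      "zlb_map L A B z2 - g * ((1 - qb) * z1 + qb * z2) = e2"
    using pair_eqs_iff_diff_and_avg[OF qb_weights(3),
        of "zlb_map L A B z1" "g * ((1 - qb) * z1 + qb * z2)" e1 "zlb_map L A B z2" e2] by blast+
  then show ?thesis
    unfolding rpe_exists_iff by (metis add.commute)
qed (rule rpe_exists_if_delta_neg)

end

theorem proposition6:
  fixes bet sig lam mu psi M Mf N p q eps2 :: real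
  assumes "0 < bet" "bet < 1" "0 < sig" "0 < lam" "0 < mu" "1 < psi"
    and "0 < M" "M \<le> 1" "0 < Mf" "Mf \<le> 1" "0 < N" "N \<le> 1"
    and "0 < p" "p \<le> 1" "0 < q" "q \<le> 1" "(p, q) \<noteq> (1, 1)"
    and "min M (min Mf N) < 1"
    and "0 \<le> eps2"
  defines "delta \<equiv> (M - 1) * (1 - Mf * bet) + lam * sig * N"
  shows "\<exists>eRPE :: ereal. eRPE \<noteq> \<infinity> \<and>
     (\<forall>eps1. BRRPE_exists bet sig lam mu psi M Mf N p q eps1 eps2 \<longleftrightarrow> ereal eps1 \<ge> eRPE) \<and>
     (delta < 0 \<longrightarrow> eRPE = -\<infinity>) \<and>
     (\<forall>eBR :: ereal. eBR \<noteq> \<infinity> \<and>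
        (\<forall>eps1. BRE_exists bet sig lam mu psi M Mf N p q eps1 eps2 \<longleftrightarrow> ereal eps1 \<ge> eBR) \<longrightarrow>
        ((delta \<ge> 0 \<and> p + q \<ge> 1) \<or> delta < 0) \<longrightarrow> eBR \<ge> eRPE)"
proof -
  interpret m: nk_model bet sig lam mu psi M Mf N p q
    using assms(1-17) by unfold_locales
  have delta: "m.delta = delta"
    by (simp add: m.delta_def delta_def)
  obtain eRPE where eRPE: "eRPE \<noteq> \<infinity>" "\<forall>e1. m.rpe_exists e1 eps2 \<longleftrightarrow> eRPE \<le> ereal e1"
      "delta < 0 \<Longrightarrow> eRPE = -\<infinity>"
    using m.rpe_threshold[OF assms(19)] unfolding delta by blast
  show ?thesis
  proof (intro exI[of _ eRPE] conjI allI impI)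
    fix eBR :: ereal
    assume eBR: "eBR \<noteq> \<infinity> \<and> (\<forall>eps1. m.bre_exists eps1 eps2 \<longleftrightarrow> ereal eps1 \<ge> eBR)"
      and "(delta \<ge> 0 \<and> p + q \<ge> 1) \<or> delta < 0"
    then have "\<forall>e1. m.bre_exists e1 eps2 \<longrightarrow> m.rpe_exists e1 eps2"
      using m.bre_imp_rpe unfolding delta by blast
    with eBR show "eBR \<ge> eRPE"
      by (intro threshold_mono[OF _ _ eRPE(2)]) auto
  qed (use eRPE in auto)
qed

end
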